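(* Let Assumption 1 hold and let $K_{\mathrm f}\in\mathbb{R}^{1\times 2n}$ be such that $A_{\mathrm f}+B_{\mathrm f}K_{\mathrm f}$ is Hurwitz. If the polynomial $s^n+c_1s^{n-1}+\dots+c_{n-1}s+c_n$ is Hurwitz, then the origin is globally asymptotically stable for the closed-loop system with state $(x,\zeta,\mu)\in\mathbb{R}^{3n}$ given by $\dot x=Ax+Bu$, $\dot\zeta=A_{\mathrm r}\zeta+B_{\mathrm r}u$, $\dot\mu=A_{\mathrm r}\mu+B_{\mathrm r}Cx$, $u=K_{\mathrm f}\,\mathrm{col}(\zeta,\mu)$.
   Context: Fix $n\ge 1$ and real numbers $a_1,\dots,a_n,b_1,\dots,b_n$. The plant is the continuous-time SISO system $y^{(n)}+a_1y^{(n-1)}+\dots+a_ny=b_1u^{(n-1)}+\dots+b_nu$, represented in observability canonical form $\dot x=Ax+Bu$, $y=Cx$, $x(t)\in\mathbb{R}^n$, where $C=[0_{1,n-1}\;1]$, $A$ is the $n\times n$ matrix whose first $n-1$ columns are $\begin{bmatrix}0_{1,n-1}\\ I_{n-1}\end{bmatrix}$ and whose last column is $(-a_n,\dots,-a_1)^\top$, and $B=(b_n,\dots,b_1)^\top$. Assumption 1: the polynomials $s^n+a_1s^{n-1}+\dots+a_n$ and $b_1s^{n-1}+\dots+b_n$ are coprime. For real parameters $c_1,\dots,c_n$, $A_{\mathrm r}\in\mathbb{R}^{n\times n}$ is the matrix whose first $n-1$ rows are $[0_{n-1,1}\;I_{n-1}]$ and whose last row is $(-c_n,\dots,-c_1)$,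 and $B_{\mathrm r}=(0,\dots,0,1)^\top\in\mathbb{R}^n$. Define $A_{\mathrm f}=\begin{bmatrix}A_{\mathrm r}&0_{n,n}\\ L_b& A_a\end{bmatrix}\in\mathbb{R}^{2n\times 2n}$, where $L_b\in\mathbb{R}^{n\times n}$ has all rows zero except the last, which equals $(b_n,\dots,b_1)$, and $A_a\in\mathbb{R}^{n\times n}$ has first $n-1$ rows $[0_{n-1,1}\;I_{n-1}]$ and last row $(-a_n,\dots,-a_1)$; and $B_{\mathrm f}=\mathrm{col}(0_{n-1,1},1,0_{n,1})\in\mathbb{R}^{2n}$. A square matrix is Hurwitz if all its eigenvalues have negative real part; a polynomial is Hurwitz if all its roots have negative real part. *)

theory Defs
  imports Complex_Main "Jordan_Normal_Form.Char_Poly" "HOL-Computational_Algebra.Polynomial"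
begin

text \<open>Indexing convention: matrix/vector entries are 0-based; the paper's
  coefficients a_k, b_k, c_k (k = 1..n) are given as functions nat => real,
  used at arguments 1..n.\<close>

(* Plant in observability canonical form *)
definition plant_A :: "nat \<Rightarrow> (nat \<Rightarrow> real) \<Rightarrow> real mat" where
  "plant_A n a = mat n n (\<lambda>(i,j). if j < n - 1 then (if i = j + 1 then 1 else 0) else - a (n - i))"

definition plant_B :: "nat \<Rightarrow> (nat \<Rightarrow> real) \<Rightarrow> real mat" where
  "plant_B n b = mat n 1 (\<lambda>(i,j). b (n - i))"

definition plant_C :: "nat \<Rightarrow> real mat" where
  "plant_C n = mat 1 n (\<lambda>(i,j). if j = n - 1 then 1 else 0)"

definition comp_mat :: "nat \<Rightarrow> (nat \<Rightarrow> real) \<Rightarrow> real mat" where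
  "comp_mat n p = mat n n (\<lambda>(i,j). if i < n - 1 then (if j = i + 1 then 1 else 0) else - p (n - j))"

definition A_r :: "nat \<Rightarrow> (nat \<Rightarrow> real) \<Rightarrow> real mat" where
  "A_r n c = comp_mat n c"

definition B_r :: "nat \<Rightarrow> real mat" where
  "B_r n = mat n 1 (\<lambda>(i,j). if i = n - 1 then 1 else 0)"

definition L_b :: "nat \<Rightarrow> (nat \<Rightarrow> real) \<Rightarrow> real mat" where
  "L_b n b = mat n n (\<lambda>(i,j). if i = n - 1 then b (n - j) else 0)"

definition A_a :: "nat \<Rightarrow> (nat \<Rightarrow> real) \<Rightarrow> real mat" where
  "A_a n a = comp_mat n a"

definition A_f :: "nat \<Rightarrow> (nat \<Rightarrow> real) \<Rightarrow> (nat \<Rightarrow> real) \<Rightarrow> (nat \<Rightarrow> real) \<Rightarrow> real mat" where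
  "A_f n a b c = four_block_mat (A_r n c) (0\<^sub>m n n) (L_b n b) (A_a n a)"

definition B_f :: "nat \<Rightarrow> real mat" where
  "B_f n = mat (2 * n) 1 (\<lambda>(i,j). if i = n - 1 then 1 else 0)"

definition hurwitz_mat :: "real mat \<Rightarrow> bool" where
  "hurwitz_mat M \<longleftrightarrow> (\<forall>ev. eigenvalue (map_mat complex_of_real M) ev \<longrightarrow> Re ev < 0)"

definition hurwitz_poly :: "real poly \<Rightarrow> bool" where
  "hurwitz_poly p \<longleftrightarrow> (\<forall>z. poly (map_poly complex_of_real p) z = 0 \<longrightarrow> Re z < 0)"

definition monic_poly :: "nat \<Rightarrow> (nat \<Rightarrow> real) \<Rightarrow> real poly" where
  "monic_poly n p = monom 1 n + (\<Sum>k=1..n. monom (p k) (n - k))"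

definition coef_poly :: "nat \<Rightarrow> (nat \<Rightarrow> real) \<Rightarrow> real poly" where
  "coef_poly n p = (\<Sum>k=1..n. monom (p k) (n - k))"

definition assumption1 :: "nat \<Rightarrow> (nat \<Rightarrow> real) \<Rightarrow> (nat \<Rightarrow> real) \<Rightarrow> bool" where
  "assumption1 n a b \<longleftrightarrow> coprime (monic_poly n a) (coef_poly n b)"

definition sc :: "real \<Rightarrow> real vec" where
  "sc u = vec 1 (\<lambda>_. u)"

(* componentwise derivative (right derivative at 0 via within {0..}) of a vector trajectory *)
definition vec_deriv :: "nat \<Rightarrow> (real \<Rightarrow> real vec) \<Rightarrow> real vec \<Rightarrow> real \<Rightarrow> bool" where
  "vec_deriv N f v t \<longleftrightarrow> (\<forall>i<N. ((\<lambda>s. f s $ i) has_real_derivative (v $ i)) (at t within {0..}))"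

definition closed_loop_sol ::
  "nat \<Rightarrow> (nat \<Rightarrow> real) \<Rightarrow> (nat \<Rightarrow> real) \<Rightarrow> (nat \<Rightarrow> real) \<Rightarrow> real mat
     \<Rightarrow> (real \<Rightarrow> real vec) \<Rightarrow> (real \<Rightarrow> real vec) \<Rightarrow> (real \<Rightarrow> real vec) \<Rightarrow> bool" where
  "closed_loop_sol n a b c Kf x \<zeta> \<mu> \<longleftrightarrow>
     (\<forall>t. x t \<in> carrier_vec n \<and> \<zeta> t \<in> carrier_vec n \<and> \<mu> t \<in> carrier_vec n) \<and>
     (\<forall>t\<ge>0. let u = (Kf *\<^sub>v (\<zeta> t @\<^sub>v \<mu> t)) $ 0 in
        vec_deriv n x (plant_A n a *\<^sub>v x t + plant_B n b *\<^sub>v sc u) t \<and>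
        vec_deriv n \<zeta> (A_r n c *\<^sub>v \<zeta> t + B_r n *\<^sub>v sc u) t \<and>
        vec_deriv n \<mu> (A_r n c *\<^sub>v \<mu> t + B_r n *\<^sub>v (plant_C n *\<^sub>v x t)) t)"

definition state_norm :: "nat \<Rightarrow> real vec \<Rightarrow> real vec \<Rightarrow> real vec \<Rightarrow> real" where
  "state_norm n x \<zeta> \<mu> = sqrt (\<Sum>i<n. (x $ i)\<^sup>2 + (\<zeta> $ i)\<^sup>2 + (\<mu> $ i)\<^sup>2)"

(* global asymptotic stability of the origin: Lyapunov stability + global attractivity *)
definition closed_loop_GAS :: "nat \<Rightarrow> (nat \<Rightarrow> real) \<Rightarrow> (nat \<Rightarrow> real) \<Rightarrow> (nat \<Rightarrow> real) \<Rightarrow> real mat \<Rightarrow> bool" where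
  "closed_loop_GAS n a b c Kf \<longleftrightarrow>
     (\<forall>\<epsilon>>0. \<exists>\<delta>>0. \<forall>x \<zeta> \<mu>. closed_loop_sol n a b c Kf x \<zeta> \<mu> \<longrightarrow>
          state_norm n (x 0) (\<zeta> 0) (\<mu> 0) < \<delta> \<longrightarrow> (\<forall>t\<ge>0. state_norm n (x t) (\<zeta> t) (\<mu> t) < \<epsilon>)) \<and>
     (\<forall>x \<zeta> \<mu>. closed_loop_sol n a b c Kf x \<zeta> \<mu> \<longrightarrow>
          ((\<lambda>t. state_norm n (x t) (\<zeta> t) (\<mu> t)) \<longlongrightarrow> 0) at_top)"

end

(*
  In the coordinates z = (x, zeta, mu) the closed loop is z' = M z. Let M v = lambda v with
  v = (x, zeta, mu). The companion structure of A_r makes zeta and mu geometric in lambda, with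
  u = c(lambda) zeta_0 and y = c(lambda) mu_0 for the filter polynomial c, while the observability
  form of the plant gives a(lambda) y = b(lambda) u. Unless c(lambda) = 0, cancelling c(lambda) shows
  that (zeta, mu) is an eigenvector of A_f + B_f K_f for lambda; hence M is Hurwitz.
  A Hurwitz matrix is similar (Schur form, rescaled by a diagonal matrix) to a matrix B whose
  diagonal has real parts at most -alpha and whose off-diagonal part is small, so |Q z|^2 for the
  similarity Q is a Lyapunov function decaying like exp(-alpha t).
*)
theory Submission
  imports Defs "Jordan_Normal_Form.Schur_Decomposition" "HOL-Analysis.Convex"
begin

section \<open>Exponential stability of Hurwitz matrices\<close>

lemma eigenvalue_similar_mat_iff:
  fixes A B :: "'a::field mat"
  assumes A: "A \<in> carrier_mat n n" and B: "B \<in> carrier_mat n n" and sim: "similar_mat A B"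
  shows "eigenvalue A k \<longleftrightarrow> eigenvalue B k"
  using char_poly_similar[OF sim] by (simp add: eigenvalue_root_char_poly[OF A] eigenvalue_root_char_poly[OF B])

lemma upper_triangular_diag_eigenvalue:
  fixes T :: "'a::field mat"
  assumes T: "T \<in> carrier_mat n n" and ut: "upper_triangular T" and i: "i < n"
  shows "eigenvalue T (T $$ (i, i))"
proof -
  have "T $$ (i, i) \<in> set (diag_mat T)"
    using T i by (auto simp: diag_mat_def)
  then show ?thesis
    by (simp add: eigenvalue_root_char_poly[OF T] char_poly_upper_triangular[OF T ut]
        poly_prod_list_zero_iff)
qed

lemma similar_mat_wit_diag_scaling:
  fixes T :: "'a::real_normed_field mat"
  assumes T: "T \<in> carrier_mat n n" and s: "s > 0"
  shows "similar_mat_wit T (mat n n (\<lambda>(i, j). of_real (inverse s ^ i) * T $$ (i, j) * of_real (s ^ j)))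
    (mat_diag n (\<lambda>i. of_real (s ^ i))) (mat_diag n (\<lambda>i. of_real (inverse s ^ i)))"
    (is "similar_mat_wit T ?B ?D ?D'")
proof (rule similar_mat_witI)
  show "?D * ?D' = 1\<^sub>m n" "?D' * ?D = 1\<^sub>m n"
    using s by (simp_all add: power_inverse flip: of_real_mult mat_diag_one)
  have "?D * ?B = mat n n (\<lambda>(i, j). T $$ (i, j) * of_real (s ^ j))"
    using s by (auto simp: mat_diag_mult_left[of _ n n] field_simps simp flip: of_real_mult power_mult_distrib)
  then show "T = ?D * ?B * ?D'"
    using s T by (auto simp: mat_diag_mult_right[of _ n n] field_simps simp flip: of_real_mult power_mult_distrib)
qed (use T in auto)

lemma upper_triangular_similar_small_off_diagonal:
  fixes T :: "'a::real_normed_field mat"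
  assumes T: "T \<in> carrier_mat n n" and ut: "upper_triangular T" and \<epsilon>: "\<epsilon> > 0"
  obtains B P Q where "similar_mat_wit T B P Q" "\<And>i. i < n \<Longrightarrow> B $$ (i, i) = T $$ (i, i)"
    "\<And>i j. i < n \<Longrightarrow> j < n \<Longrightarrow> i \<noteq> j \<Longrightarrow> norm (B $$ (i, j)) \<le> \<epsilon>"
proof -
  define m where "m = (\<Sum>i<n. \<Sum>j<n. norm (T $$ (i, j)))"
  have m: "norm (T $$ (i, j)) \<le> m" if "i < n" "j < n" for i j
    using that unfolding m_def
    by (intro order.trans[OF member_le_sum[of j] member_le_sum[of i]] sum_nonneg) auto
  define s where "s = min 1 (\<epsilon> / (m + 1))"
  have m0: "m \<ge> 0" unfolding m_def by (intro sum_nonneg) auto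
  then have s0: "s > 0" and s1: "s \<le> 1"
    using \<epsilon> by (auto simp: s_def)
  have s\<epsilon>: "s * (m + 1) \<le> \<epsilon>"
    using m0 by (simp add: s_def flip: pos_le_divide_eq)
  define B where "B = mat n n (\<lambda>(i, j). of_real (inverse s ^ i) * T $$ (i, j) * of_real (s ^ j) :: 'a)"
  have diag: "B $$ (i, i) = T $$ (i, i)" if "i < n" for i
    using that s0 by (simp add: B_def field_simps flip: of_real_mult power_mult_distrib)
  have off: "norm (B $$ (i, j)) \<le> \<epsilon>" if ij: "i < n" "j < n" "i \<noteq> j" for i j
  proof (cases "j < i")
    case True
    then have "T $$ (i, j) = 0" using ut T ij by auto
    then show ?thesis using ij \<epsilon> by (simp add: B_def)
  next
    case False
    then have "i < j" using ij by auto
    then have "s ^ j / s ^ i = s ^ (j - i)"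
      using s0 by (simp add: power_diff)
    then have "norm (B $$ (i, j)) = s ^ (j - i) * norm (T $$ (i, j))"
      using ij s0 by (simp add: B_def norm_mult norm_power norm_inverse divide_inverse power_inverse mult.commute)
    also have "\<dots> \<le> s * (m + 1)"
      using s0 s1 \<open>i < j\<close> m[OF ij(1,2)]
      by (intro mult_mono) (auto intro: power_le_one order.trans[OF power_decreasing[of 1]])
    finally show ?thesis using s\<epsilon> by simp
  qed
  show ?thesis
    using similar_mat_wit_diag_scaling[OF T s0, folded B_def] diag off by (rule that)
qed

lemma complex_mat_similar_small_off_diagonal:
  fixes M :: "complex mat"
  assumes M: "M \<in> carrier_mat n n" and \<epsilon>: "\<epsilon> > 0"
  obtains B P Q where "similar_mat_wit M B P Q" "\<And>i. i < n \<Longrightarrow> eigenvalue M (B $$ (i, i))"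
    "\<And>i j. i < n \<Longrightarrow> j < n \<Longrightarrow> i \<noteq> j \<Longrightarrow> cmod (B $$ (i, j)) \<le> \<epsilon>"
proof -
  obtain es where "char_poly M = (\<Prod>a\<leftarrow>es. [:- a, 1:])"
    using char_poly_factorized[OF M] by auto
  then obtain T where T: "T \<in> carrier_mat n n" and ut: "upper_triangular T" and "similar_mat M T"
    using schur_decomposition_exists[OF M] by blast
  then obtain P Q where MT: "similar_mat_wit M T P Q"
    unfolding similar_mat_def by blast
  obtain B P' Q' where TB: "similar_mat_wit T B P' Q'" and diag: "\<And>i. i < n \<Longrightarrow> B $$ (i, i) = T $$ (i, i)"
    and off: "\<And>i j. i < n \<Longrightarrow> j < n \<Longrightarrow> i \<noteq> j \<Longrightarrow> cmod (B $$ (i, j)) \<le> \<epsilon>"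
    using upper_triangular_similar_small_off_diagonal[OF T ut \<epsilon>] by blast
  have "eigenvalue M (B $$ (i, i))" if "i < n" for i
    using upper_triangular_diag_eigenvalue[OF T ut that] eigenvalue_similar_mat_iff[OF M T \<open>similar_mat M T\<close>]
    by (simp add: diag[OF that])
  then show ?thesis using that[OF similar_mat_wit_trans[OF MT TB]] off by blast
qed

definition sq_norm_vec :: "'a::real_normed_vector vec \<Rightarrow> real" where
  "sq_norm_vec v = (\<Sum>i<dim_vec v. (norm (v $ i))\<^sup>2)"

lemma sq_norm_vec_nonneg: "sq_norm_vec v \<ge> 0"
  unfolding sq_norm_vec_def by (intro sum_nonneg) auto

lemma sq_norm_vec_of_real: "sq_norm_vec (map_vec of_real v :: 'a::real_normed_algebra_1 vec) = sq_norm_vec v"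
  unfolding sq_norm_vec_def by simp

lemma sq_norm_mult_mat_vec_le:
  fixes G :: "'a::real_normed_div_algebra mat"
  assumes G: "G \<in> carrier_mat m n" and v: "v \<in> carrier_vec n"
  shows "sq_norm_vec (G *\<^sub>v v) \<le> (\<Sum>i<m. \<Sum>j<n. (norm (G $$ (i, j)))\<^sup>2) * sq_norm_vec v"
proof -
  have "(norm ((G *\<^sub>v v) $ i))\<^sup>2 \<le> (\<Sum>j<n. (norm (G $$ (i, j)))\<^sup>2) * sq_norm_vec v" if "i < m" for i
  proof -
    have "norm ((G *\<^sub>v v) $ i) \<le> (\<Sum>j<n. norm (G $$ (i, j)) * norm (v $ j))"
      using G v that
      by (auto simp: scalar_prod_def lessThan_atLeast0 norm_mult intro: order.trans[OF norm_sum])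
    then have "(norm ((G *\<^sub>v v) $ i))\<^sup>2 \<le> (\<Sum>j<n. norm (G $$ (i, j)) * norm (v $ j))\<^sup>2"
      by (simp add: power_mono)
    also have "\<dots> \<le> (\<Sum>j<n. (norm (G $$ (i, j)))\<^sup>2) * sq_norm_vec v"
      using v by (simp add: sq_norm_vec_def Cauchy_Schwarz_ineq_sum)
    finally show ?thesis .
  qed
  then show ?thesis
    using G unfolding sq_norm_vec_def[of "G *\<^sub>v v"]
    by (auto simp: sum_distrib_right intro!: sum_mono)
qed

lemma Re_quadratic_form_le:
  fixes B :: "complex mat"
  assumes B: "B \<in> carrier_mat n n" and w: "w \<in> carrier_vec n" and \<alpha>: "\<alpha> \<ge> 0"
    and diag: "\<And>i. i < n \<Longrightarrow> Re (B $$ (i, i)) \<le> - \<alpha>"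
    and off: "\<And>i j. i < n \<Longrightarrow> j < n \<Longrightarrow> i \<noteq> j \<Longrightarrow> 2 * real n * cmod (B $$ (i, j)) \<le> \<alpha>"
  shows "(\<Sum>i<n. Re (cnj (w $ i) * (B *\<^sub>v w) $ i)) \<le> - (\<alpha> / 2) * sq_norm_vec w"
proof -
  define g where "g i j = (if i = j then - \<alpha> * (cmod (w $ i))\<^sup>2 else 0)
     + \<alpha> / (2 * n) * (cmod (w $ i) * cmod (w $ j))" for i j
  have entry: "Re (cnj (w $ i) * (B $$ (i, j) * w $ j)) \<le> g i j" if ij: "i < n" "j < n" for i j
  proof (cases "i = j")
    case True
    have "Re (cnj (w $ i) * (B $$ (i, i) * w $ i)) = Re (B $$ (i, i)) * ((Re (w $ i))\<^sup>2 + (Im (w $ i))\<^sup>2)"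
      by (simp add: algebra_simps power2_eq_square)
    also have "\<dots> = Re (B $$ (i, i)) * (cmod (w $ i))\<^sup>2"
      by (simp add: cmod_power2)
    also have "\<dots> \<le> - \<alpha> * (cmod (w $ i))\<^sup>2"
      using diag ij by (intro mult_right_mono) auto
    moreover have "0 \<le> \<alpha> / (2 * n) * (cmod (w $ i) * cmod (w $ i))"
      using \<alpha> by simp
    ultimately show ?thesis using True unfolding g_def by simp
  next
    case False
    have "Re (cnj (w $ i) * (B $$ (i, j) * w $ j)) \<le> cmod (B $$ (i, j)) * (cmod (w $ i) * cmod (w $ j))"
      using complex_Re_le_cmod[of "cnj (w $ i) * (B $$ (i, j) * w $ j)"] by (simp only: norm_mult complex_mod_cnj ac_simps)
    also have "\<dots> \<le> \<alpha> / (2 * n) * (cmod (w $ i) * cmod (w $ j))"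
      using off[OF ij False] ij by (intro mult_right_mono) (auto simp: field_simps)
    finally show ?thesis using False by (simp add: g_def)
  qed
  have "(\<Sum>i<n. Re (cnj (w $ i) * (B *\<^sub>v w) $ i)) = (\<Sum>i<n. \<Sum>j<n. Re (cnj (w $ i) * (B $$ (i, j) * w $ j)))"
    using B w by (simp add: scalar_prod_def lessThan_atLeast0 sum_distrib_left)
  also have "\<dots> \<le> (\<Sum>i<n. \<Sum>j<n. g i j)"
    using entry by (intro sum_mono) auto
  also have "\<dots> = (\<Sum>i<n. - \<alpha> * (cmod (w $ i))\<^sup>2) + \<alpha> / (2 * n) * (\<Sum>i<n. \<Sum>j<n. cmod (w $ i) * cmod (w $ j))"
    unfolding g_def sum.distrib by (simp add: sum_distrib_left)
  also have "(\<Sum>i<n. \<Sum>j<n. cmod (w $ i) * cmod (w $ j)) = (\<Sum>i<n. cmod (w $ i))\<^sup>2"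
    by (simp only: power2_eq_square sum_product)
  also have "(\<Sum>i<n. - \<alpha> * (cmod (w $ i))\<^sup>2) = - \<alpha> * sq_norm_vec w"
    using w by (simp add: sq_norm_vec_def sum_distrib_left)
  also have "\<alpha> / (2 * n) * (\<Sum>i<n. cmod (w $ i))\<^sup>2 \<le> \<alpha> / (2 * n) * (sq_norm_vec w * n)"
    using w \<alpha> sum_squared_le_sum_of_squares[of "\<lambda>i. cmod (w $ i)" "{..<n}"]
    by (intro mult_left_mono) (auto simp: sq_norm_vec_def)
  also have "\<dots> \<le> \<alpha> / 2 * sq_norm_vec w"
    using \<alpha> sq_norm_vec_nonneg[of w] by (cases "n = 0") auto
  finally show ?thesis by simp
qed

lemma has_real_derivative_sq_norm_mult_mat_vec:
  fixes R :: "complex mat" and z :: "real \<Rightarrow> real vec"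
  assumes R: "R \<in> carrier_mat m N" and z: "\<And>s. z s \<in> carrier_vec N" and z': "z' \<in> carrier_vec N"
    and deriv: "\<And>k. k < N \<Longrightarrow> ((\<lambda>s. z s $ k) has_real_derivative z' $ k) (at t within X)"
  defines "w v \<equiv> R *\<^sub>v map_vec of_real v"
  shows "((\<lambda>s. sq_norm_vec (w (z s))) has_real_derivative
           2 * (\<Sum>i<m. Re (cnj (w (z t) $ i) * w z' $ i))) (at t within X)"
proof -
  define re where "re i v = (\<Sum>k<N. Re (R $$ (i, k)) * v $ k)" for i v
  define im where "im i v = (\<Sum>k<N. Im (R $$ (i, k)) * v $ k)" for i v
  have w: "w v $ i = Complex (re i v) (im i v)" if "v \<in> carrier_vec N" "i < m" for v i
    using that R by (simp add: w_def re_def im_def scalar_prod_def lessThan_atLeast0 complex_eq_iff)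
  have dim: "dim_vec (w v) = m" for v
    using R by (simp add: w_def)
  have "((\<lambda>s. \<Sum>i<m. (re i (z s))\<^sup>2 + (im i (z s))\<^sup>2) has_real_derivative
          (\<Sum>i<m. 2 * re i (z t) * re i z' + 2 * im i (z t) * im i z')) (at t within X)"
    unfolding re_def im_def using deriv
    by (auto intro!: derivative_eq_intros DERIV_sum DERIV_cmult simp: mult_ac)
  moreover have "sq_norm_vec (w (z s)) = (\<Sum>i<m. (re i (z s))\<^sup>2 + (im i (z s))\<^sup>2)" for s
    unfolding sq_norm_vec_def using R
    by (intro sum.cong) (auto simp: w z cmod_power2 dim)
  moreover have "(\<Sum>i<m. 2 * re i (z t) * re i z' + 2 * im i (z t) * im i z')
      = 2 * (\<Sum>i<m. Re (cnj (w (z t) $ i) * w z' $ i))"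
    unfolding sum_distrib_left by (intro sum.cong) (auto simp: w z z' algebra_simps)
  ultimately show ?thesis by simp
qed

lemma antitone_of_deriv_nonpos:
  fixes f f' :: "real \<Rightarrow> real"
  assumes deriv: "\<And>t. t \<ge> 0 \<Longrightarrow> (f has_real_derivative f' t) (at t within {0..})"
    and nonpos: "\<And>t. t \<ge> 0 \<Longrightarrow> f' t \<le> 0" and t: "t \<ge> 0"
  shows "f t \<le> f 0"
proof (rule DERIV_nonpos_imp_decreasing_open[OF t])
  fix s :: real assume s: "0 < s" "s < t"
  have "(f has_real_derivative f' s) (at s within {0..t})"
    using deriv[of s] s by (auto intro: DERIV_subset)
  moreover have "at s within {0..t} = at s"
    using s by (intro at_within_Icc_at) auto
  ultimately show "\<exists>y. (f has_real_derivative y) (at s) \<and> y \<le> 0"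
    using nonpos[of s] s by auto
next
  have "continuous_on {0..} f"
    unfolding continuous_on_eq_continuous_within using deriv DERIV_continuous by fastforce
  then show "continuous_on {0..t} f"
    by (rule continuous_on_subset) auto
qed

lemma exp_decay_of_deriv_le:
  fixes V V' :: "real \<Rightarrow> real"
  assumes deriv: "\<And>t. t \<ge> 0 \<Longrightarrow> (V has_real_derivative V' t) (at t within {0..})"
    and le: "\<And>t. t \<ge> 0 \<Longrightarrow> V' t \<le> - \<alpha> * V t" and t: "t \<ge> 0"
  shows "V t \<le> exp (- \<alpha> * t) * V 0"
proof -
  have "exp (\<alpha> * t) * V t \<le> exp (\<alpha> * 0) * V 0"
  proof (rule antitone_of_deriv_nonpos[where f = "\<lambda>s. exp (\<alpha> * s) * V s", OF _ _ t])
    fix s :: real assume s: "s \<ge> 0"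
    show "((\<lambda>s. exp (\<alpha> * s) * V s) has_real_derivative
        exp (\<alpha> * s) * (\<alpha> * V s + V' s)) (at s within {0..})"
      using deriv[OF s] by (auto intro!: derivative_eq_intros simp: algebra_simps)
    show "exp (\<alpha> * s) * (\<alpha> * V s + V' s) \<le> 0"
      using le[OF s] by (simp add: mult_nonneg_nonpos)
  qed
  then show ?thesis by (simp add: exp_minus field_simps)
qed

lemma hurwitz_mat_margin:
  assumes M: "M \<in> carrier_mat n n" and H: "hurwitz_mat M"
  obtains \<alpha> where "\<alpha> > 0" "\<And>ev. eigenvalue (map_mat complex_of_real M) ev \<Longrightarrow> Re ev \<le> - \<alpha>"
proof -
  have Mc: "map_mat complex_of_real M \<in> carrier_mat n n" using M by simp
  obtain es where es: "char_poly (map_mat complex_of_real M) = (\<Prod>a\<leftarrow>es. [:- a, 1:])"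
    using char_poly_factorized[OF Mc] by auto
  have eig_iff: "eigenvalue (map_mat complex_of_real M) ev \<longleftrightarrow> ev \<in> set es" for ev
    by (simp add: eigenvalue_root_char_poly[OF Mc] es poly_prod_list_zero_iff)
  define \<alpha> where "\<alpha> = Min (insert 1 ((\<lambda>a. - Re a) ` set es))"
  have "\<alpha> > 0"
    using H unfolding \<alpha>_def hurwitz_mat_def eig_iff by (subst Min_gr_iff) auto
  moreover have "Re ev \<le> - \<alpha>" if "eigenvalue (map_mat complex_of_real M) ev" for ev
  proof -
    have "\<alpha> \<le> - Re ev"
      unfolding \<alpha>_def by (rule Min_le) (use that eig_iff in auto)
    then show ?thesis by simp
  qed
  ultimately show ?thesis by (rule that)
qed

lemma sq_norm_similarity_decay:
  fixes M :: "real mat" and Q B :: "complex mat" and z :: "real \<Rightarrow> real vec"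
  assumes M: "M \<in> carrier_mat N N" and Q: "Q \<in> carrier_mat N N" and B: "B \<in> carrier_mat N N"
    and QM: "Q * map_mat of_real M = B * Q" and \<alpha>: "\<alpha> \<ge> 0"
    and diag: "\<And>i. i < N \<Longrightarrow> Re (B $$ (i, i)) \<le> - \<alpha>"
    and off: "\<And>i j. i < N \<Longrightarrow> j < N \<Longrightarrow> i \<noteq> j \<Longrightarrow> 2 * real N * cmod (B $$ (i, j)) \<le> \<alpha>"
    and z: "\<And>s. z s \<in> carrier_vec N" and deriv: "\<And>s. s \<ge> 0 \<Longrightarrow> vec_deriv N z (M *\<^sub>v z s) s"
    and t: "t \<ge> 0"
  defines "w s \<equiv> Q *\<^sub>v map_vec of_real (z s)"
  shows "sq_norm_vec (w t) \<le> exp (- \<alpha> * t) * sq_norm_vec (w 0)"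
proof (rule exp_decay_of_deriv_le[OF _ _ t])
  fix s :: real assume s: "s \<ge> 0"
  have w: "w s \<in> carrier_vec N" using Q z by (simp add: w_def)
  have w': "Q *\<^sub>v map_vec of_real (M *\<^sub>v z s) = B *\<^sub>v w s"
  proof -
    have "Q *\<^sub>v map_vec of_real (M *\<^sub>v z s) = (Q * map_mat of_real M) *\<^sub>v map_vec of_real (z s)"
      using M Q z by (simp add: of_real_hom.mult_mat_vec_hom assoc_mult_mat_vec[of _ N N _ N])
    also have "\<dots> = B *\<^sub>v w s"
      unfolding QM w_def by (rule assoc_mult_mat_vec) (use Q B z in auto)
    finally show ?thesis .
  qed
  have "((\<lambda>s. sq_norm_vec (w s)) has_real_derivative
      2 * (\<Sum>i<N. Re (cnj (w s $ i) * (Q *\<^sub>v map_vec of_real (M *\<^sub>v z s)) $ i))) (at s within {0..})"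
    unfolding w_def
    by (rule has_real_derivative_sq_norm_mult_mat_vec) (use Q z M deriv[OF s] in \<open>auto simp: vec_deriv_def\<close>)
  then show "((\<lambda>s. sq_norm_vec (w s)) has_real_derivative
      2 * (\<Sum>i<N. Re (cnj (w s $ i) * (B *\<^sub>v w s) $ i))) (at s within {0..})"
    by (simp only: w')
  have "(\<Sum>i<N. Re (cnj (w s $ i) * (B *\<^sub>v w s) $ i)) \<le> - (\<alpha> / 2) * sq_norm_vec (w s)"
    using B w \<alpha> diag off by (rule Re_quadratic_form_le)
  then show "2 * (\<Sum>i<N. Re (cnj (w s $ i) * (B *\<^sub>v w s) $ i)) \<le> - \<alpha> * sq_norm_vec (w s)"
    by linarith
qed

lemma hurwitz_mat_similar_dominant:
  assumes M: "M \<in> carrier_mat N N" and H: "hurwitz_mat M"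
  obtains \<alpha> B P Q where "\<alpha> > 0" "similar_mat_wit (map_mat complex_of_real M) B P Q"
    "\<And>i. i < N \<Longrightarrow> Re (B $$ (i, i)) \<le> - \<alpha>"
    "\<And>i j. i < N \<Longrightarrow> j < N \<Longrightarrow> i \<noteq> j \<Longrightarrow> 2 * real N * cmod (B $$ (i, j)) \<le> \<alpha>"
proof -
  have Mc: "map_mat complex_of_real M \<in> carrier_mat N N" using M by simp
  obtain \<alpha> where \<alpha>: "\<alpha> > 0" and margin: "\<And>ev. eigenvalue (map_mat complex_of_real M) ev \<Longrightarrow> Re ev \<le> - \<alpha>"
    using hurwitz_mat_margin[OF M H] by blast
  have "\<alpha> / (2 * real N + 1) > 0" using \<alpha> by simp
  then obtain B P Q where sim: "similar_mat_wit (map_mat complex_of_real M) B P Q"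
    and diag: "\<And>i. i < N \<Longrightarrow> eigenvalue (map_mat complex_of_real M) (B $$ (i, i))"
    and off: "\<And>i j. i < N \<Longrightarrow> j < N \<Longrightarrow> i \<noteq> j \<Longrightarrow> cmod (B $$ (i, j)) \<le> \<alpha> / (2 * real N + 1)"
    using complex_mat_similar_small_off_diagonal[OF Mc] by blast
  have dom: "Re (B $$ (i, i)) \<le> - \<alpha>" if "i < N" for i
    using margin[OF diag[OF that]] .
  have small: "2 * real N * cmod (B $$ (i, j)) \<le> \<alpha>" if "i < N" "j < N" "i \<noteq> j" for i j
  proof -
    have "2 * real N * cmod (B $$ (i, j)) \<le> (2 * real N + 1) * (\<alpha> / (2 * real N + 1))"
      using off[OF that] by (intro mult_mono) auto
    then show ?thesis by simp
  qed
  show ?thesis by (rule that[OF \<alpha> sim dom small])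
qed

theorem hurwitz_mat_exp_decay:
  assumes M: "M \<in> carrier_mat N N" and H: "hurwitz_mat M"
  obtains C \<alpha> where "C \<ge> 0" "\<alpha> > 0"
    "\<And>z t. (\<And>s. z s \<in> carrier_vec N) \<Longrightarrow> (\<And>s. s \<ge> 0 \<Longrightarrow> vec_deriv N z (M *\<^sub>v z s) s) \<Longrightarrow> t \<ge> 0 \<Longrightarrow>
       sq_norm_vec (z t) \<le> C * exp (- \<alpha> * t) * sq_norm_vec (z 0)"
proof -
  obtain \<alpha> B P Q where \<alpha>: "\<alpha> > 0" and sim: "similar_mat_wit (map_mat complex_of_real M) B P Q"
    and diag: "\<And>i. i < N \<Longrightarrow> Re (B $$ (i, i)) \<le> - \<alpha>"
    and off: "\<And>i j. i < N \<Longrightarrow> j < N \<Longrightarrow> i \<noteq> j \<Longrightarrow> 2 * real N * cmod (B $$ (i, j)) \<le> \<alpha>"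
    using hurwitz_mat_similar_dominant[OF M H] by blast
  have Mc: "map_mat complex_of_real M \<in> carrier_mat N N" using M by simp
  note PQ = similar_mat_witD2[OF Mc sim]
  have QM: "Q * map_mat of_real M = B * Q"
  proof -
    have "Q * map_mat of_real M = Q * (P * (B * Q))"
      using PQ by (simp add: assoc_mult_mat[of P N N B N Q N])
    also have "\<dots> = (Q * P) * (B * Q)"
      by (rule assoc_mult_mat[symmetric]) (use PQ in auto)
    finally show ?thesis using PQ by simp
  qed
  define CP where "CP = (\<Sum>i<N. \<Sum>j<N. (cmod (P $$ (i, j)))\<^sup>2)"
  define CQ where "CQ = (\<Sum>i<N. \<Sum>j<N. (cmod (Q $$ (i, j)))\<^sup>2)"
  have CP: "CP \<ge> 0" unfolding CP_def by (intro sum_nonneg) auto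
  show ?thesis
  proof (rule that[of "CP * CQ" \<alpha>])
    show "CP * CQ \<ge> 0" using CP unfolding CQ_def by (intro mult_nonneg_nonneg sum_nonneg) auto
    fix z :: "real \<Rightarrow> real vec" and t :: real
    assume z: "\<And>s. z s \<in> carrier_vec N" and deriv: "\<And>s. s \<ge> 0 \<Longrightarrow> vec_deriv N z (M *\<^sub>v z s) s"
      and t: "t \<ge> 0"
    define w where "w s = Q *\<^sub>v map_vec of_real (z s)" for s
    have "P *\<^sub>v w t = (P * Q) *\<^sub>v map_vec of_real (z t)"
      unfolding w_def by (rule assoc_mult_mat_vec[symmetric]) (use PQ z in auto)
    then have "sq_norm_vec (z t) = sq_norm_vec (P *\<^sub>v w t)"
      using PQ z by (simp add: sq_norm_vec_of_real)
    also have "\<dots> \<le> CP * sq_norm_vec (w t)"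
      unfolding CP_def w_def by (rule sq_norm_mult_mat_vec_le) (use PQ z in auto)
    also have "\<dots> \<le> CP * (exp (- \<alpha> * t) * sq_norm_vec (w 0))"
    proof (rule mult_left_mono[OF _ CP])
      show "sq_norm_vec (w t) \<le> exp (- \<alpha> * t) * sq_norm_vec (w 0)"
        unfolding w_def using PQ \<alpha> by (intro sq_norm_similarity_decay[OF M _ _ QM _ diag off z deriv t]) auto
    qed
    also have "\<dots> \<le> CP * (exp (- \<alpha> * t) * (CQ * sq_norm_vec (z 0)))"
      using sq_norm_mult_mat_vec_le[of Q N N "map_vec of_real (z 0)"] PQ z CP
      unfolding CQ_def w_def sq_norm_vec_of_real by (intro mult_left_mono) auto
    finally show "sq_norm_vec (z t) \<le> CP * CQ * exp (- \<alpha> * t) * sq_norm_vec (z 0)"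
      by (simp add: ac_simps)
  qed (rule \<alpha>)
qed

section \<open>The spectrum of the closed loop\<close>

text \<open>The system matrices are real but their eigenvectors are complex, so their action is described
  for their images under of_real in an arbitrary real field; the same lemmas then serve for real
  trajectories.\<close>

lemmas of_real_if_distribs = if_distrib[of of_real] if_distrib[of "\<lambda>x. x * _"]

lemma system_mat_dims [simp]:
  "dim_row (plant_A n a) = n" "dim_col (plant_A n a) = n"
  "dim_row (plant_B n b) = n" "dim_col (plant_B n b) = 1"
  "dim_row (plant_C n) = 1" "dim_col (plant_C n) = n"
  "dim_row (comp_mat n p) = n" "dim_col (comp_mat n p) = n"
  "dim_row (B_r n) = n" "dim_col (B_r n) = 1"
  "dim_row (L_b n b) = n" "dim_col (L_b n b) = n"
  "dim_row (A_r n c) = n" "dim_col (A_r n c) = n"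
  "dim_row (A_a n a) = n" "dim_col (A_a n a) = n"
  "dim_row (B_f n) = n + n" "dim_col (B_f n) = 1"
  by (simp_all add: plant_A_def plant_B_def plant_C_def comp_mat_def A_r_def A_a_def B_r_def L_b_def B_f_def)

lemma system_mat_carriers:
  "plant_A n a \<in> carrier_mat n n" "plant_B n b \<in> carrier_mat n 1" "plant_C n \<in> carrier_mat 1 n"
  "A_r n c \<in> carrier_mat n n" "A_a n a \<in> carrier_mat n n" "B_r n \<in> carrier_mat n 1"
  "L_b n b \<in> carrier_mat n n" "B_f n \<in> carrier_mat (n + n) 1"
  unfolding plant_A_def plant_B_def plant_C_def A_r_def A_a_def comp_mat_def B_r_def L_b_def
    B_f_def mult_2
  by simp_all

lemma comp_mat_mult_vec_nth:
  fixes v :: "'a::real_algebra_1 vec"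
  assumes v: "v \<in> carrier_vec n" and i: "i < n"
  shows "(map_mat of_real (comp_mat n p) *\<^sub>v v) $ i =
    (if i < n - 1 then v $ (i + 1) else - (\<Sum>j<n. of_real (p (n - j)) * v $ j))"
proof (cases "i < n - 1")
  case True
  have "(map_mat of_real (comp_mat n p) *\<^sub>v v) $ i = (\<Sum>j<n. if j = i + 1 then v $ j else 0)"
    using v i True by (auto simp: comp_mat_def scalar_prod_def lessThan_atLeast0 of_real_if_distribs cong: if_cong intro!: sum.cong)
  then show ?thesis using True by (simp add: less_diff_conv)
next
  case False
  then show ?thesis
    using v i by (auto simp: comp_mat_def scalar_prod_def lessThan_atLeast0 sum_negf of_real_if_distribs cong: if_cong intro!: sum.cong)
qed

lemma plant_A_mult_vec_nth:
  fixes v :: "'a::real_algebra_1 vec"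
  assumes v: "v \<in> carrier_vec n" and i: "i < n"
  shows "(map_mat of_real (plant_A n a) *\<^sub>v v) $ i =
    (if i = 0 then 0 else v $ (i - 1)) - of_real (a (n - i)) * v $ (n - 1)"
proof -
  have n: "{..<n} = insert (n - 1) {..<n - 1}" using i by auto
  have "(map_mat of_real (plant_A n a) *\<^sub>v v) $ i =
      (\<Sum>j<n. (if j < n - 1 then (if i = j + 1 then 1 else 0) else - of_real (a (n - i))) * v $ j)"
    using v i by (auto simp: plant_A_def scalar_prod_def lessThan_atLeast0 of_real_if_distribs cong: if_cong intro!: sum.cong)
  also have "\<dots> = (\<Sum>j<n - 1. if j = i - 1 \<and> i \<noteq> 0 then v $ j else 0) - of_real (a (n - i)) * v $ (n - 1)"
    unfolding n by (subst sum.insert) (auto intro!: sum.cong)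
  also have "(\<Sum>j<n - 1. if j = i - 1 \<and> i \<noteq> 0 then v $ j else 0) = (if i = 0 then 0 else v $ (i - 1))"
    using i by (cases i) auto
  finally show ?thesis .
qed

lemma L_b_mult_vec_nth:
  fixes v :: "'a::real_algebra_1 vec"
  assumes v: "v \<in> carrier_vec n" and i: "i < n"
  shows "(map_mat of_real (L_b n b) *\<^sub>v v) $ i = (if i = n - 1 then \<Sum>j<n. of_real (b (n - j)) * v $ j else 0)"
  using v i by (auto simp: L_b_def scalar_prod_def lessThan_atLeast0 of_real_if_distribs cong: if_cong intro!: sum.cong)

lemma plant_B_mult_vec_nth:
  fixes u :: "'a::real_algebra_1 vec"
  assumes u: "u \<in> carrier_vec 1" and i: "i < n"
  shows "(map_mat of_real (plant_B n b) *\<^sub>v u) $ i = of_real (b (n - i)) * u $ 0"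
  using u i by (simp add: plant_B_def scalar_prod_def)

lemma B_r_mult_vec_nth:
  fixes u :: "'a::real_algebra_1 vec"
  assumes u: "u \<in> carrier_vec 1" and i: "i < n"
  shows "(map_mat of_real (B_r n) *\<^sub>v u) $ i = (if i = n - 1 then u $ 0 else 0)"
  using u i by (simp add: B_r_def scalar_prod_def of_real_if_distribs cong: if_cong)

lemma B_f_mult_vec_nth:
  fixes u :: "'a::real_algebra_1 vec"
  assumes u: "u \<in> carrier_vec 1" and i: "i < 2 * n"
  shows "(map_mat of_real (B_f n) *\<^sub>v u) $ i = (if i = n - 1 then u $ 0 else 0)"
  using u i by (simp add: B_f_def scalar_prod_def of_real_if_distribs cong: if_cong)

lemma plant_C_mult_vec:
  fixes v :: "'a::real_algebra_1 vec"
  assumes v: "v \<in> carrier_vec n" and n: "n \<ge> 1"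
  shows "map_mat of_real (plant_C n) *\<^sub>v v = vec 1 (\<lambda>_. v $ (n - 1))"
proof -
  have "(\<Sum>j<n. (if j = n - 1 then 1 else 0) * v $ j) = v $ (n - 1)"
    using n by (simp add: if_distrib[of "\<lambda>x. x * _"] cong: if_cong)
  then show ?thesis
    using v by (auto simp: plant_C_def scalar_prod_def lessThan_atLeast0 of_real_if_distribs cong: if_cong)
qed

lemma poly_coef_poly:
  fixes l :: "'a::real_field"
  shows "poly (map_poly of_real (coef_poly n p)) l = (\<Sum>j<n. of_real (p (n - j)) * l ^ j)"
proof -
  have "poly (map_poly of_real (coef_poly n p)) l = (\<Sum>k=1..n. of_real (p k) * l ^ (n - k))"
    using of_real_hom.eval_poly_sum[of "\<lambda>k. monom (p k) (n - k)" "{1..n}" l]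
    by (simp add: coef_poly_def eval_poly_def poly_monom)
  also have "\<dots> = (\<Sum>j<n. of_real (p (n - j)) * l ^ j)"
    by (rule sum.reindex_bij_witness[of _ "\<lambda>j. n - j" "\<lambda>k. n - k"]) auto
  finally show ?thesis .
qed

lemma poly_monic_poly:
  fixes l :: "'a::real_field"
  shows "poly (map_poly of_real (monic_poly n p)) l = l ^ n + poly (map_poly of_real (coef_poly n p)) l"
  by (simp add: monic_poly_def coef_poly_def of_real_hom.map_poly_hom_add poly_monom)

lemma sum_mult_geometric_vec:
  fixes v :: "'a::comm_ring_1 vec"
  assumes geo: "\<And>i. i < n \<Longrightarrow> v $ i = l ^ i * v $ 0"
  shows "(\<Sum>j<n. f j * v $ j) = (\<Sum>j<n. f j * l ^ j) * v $ 0"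
  unfolding sum_distrib_right
proof (intro sum.cong refl)
  fix j assume "j \<in> {..<n}"
  then show "f j * v $ j = f j * l ^ j * v $ 0" using geo[of j] by simp
qed

lemma comp_mat_mult_geometric_nth:
  fixes v :: "'a::real_field vec"
  assumes v: "v \<in> carrier_vec n" and geo: "\<And>i. i < n \<Longrightarrow> v $ i = l ^ i * v $ 0" and i: "i < n"
  shows "(map_mat of_real (comp_mat n p) *\<^sub>v v) $ i =
    l * v $ i - (if i = n - 1 then poly (map_poly of_real (monic_poly n p)) l * v $ 0 else 0)"
proof (cases "i < n - 1")
  case True
  then show ?thesis using v i geo[of i] geo[of "i + 1"] by (simp add: comp_mat_mult_vec_nth del: index_mult_mat_vec)
next
  case False
  then have i': "i = n - 1" using i by simp
  have "(\<Sum>j<n. of_real (p (n - j)) * v $ j) = poly (map_poly of_real (coef_poly n p)) l * v $ 0"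
    by (simp add: poly_coef_poly sum_mult_geometric_vec[OF geo])
  moreover have "l * v $ i = l ^ n * v $ 0"
    using i i' geo[of i] by (cases n) auto
  ultimately show ?thesis
    using v i i' by (simp add: comp_mat_mult_vec_nth poly_monic_poly algebra_simps del: index_mult_mat_vec)
qed

lemma L_b_mult_geometric_nth:
  fixes v :: "'a::real_field vec"
  assumes v: "v \<in> carrier_vec n" and geo: "\<And>i. i < n \<Longrightarrow> v $ i = l ^ i * v $ 0" and i: "i < n"
  shows "(map_mat of_real (L_b n b) *\<^sub>v v) $ i =
    (if i = n - 1 then poly (map_poly of_real (coef_poly n b)) l * v $ 0 else 0)"
  using v i by (simp add: L_b_mult_vec_nth poly_coef_poly sum_mult_geometric_vec[OF geo] del: index_mult_mat_vec)

lemma companion_eigen_geometric: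
  fixes v u :: "'a::real_field vec"
  assumes v: "v \<in> carrier_vec n" and u: "u \<in> carrier_vec 1" and n: "n \<ge> 1"
    and eig: "map_mat of_real (comp_mat n p) *\<^sub>v v + map_mat of_real (B_r n) *\<^sub>v u = l \<cdot>\<^sub>v v"
  shows "\<And>i. i < n \<Longrightarrow> v $ i = l ^ i * v $ 0"
    and "u $ 0 = poly (map_poly of_real (monic_poly n p)) l * v $ 0"
proof -
  have row: "(map_mat of_real (comp_mat n p) *\<^sub>v v) $ i + (map_mat of_real (B_r n) *\<^sub>v u) $ i = l * v $ i"
    if "i < n" for i
    using arg_cong[OF eig, of "\<lambda>w. w $ i"] v u that by (simp del: index_mult_mat_vec)
  show geo: "v $ i = l ^ i * v $ 0" if "i < n" for i
    using that
  proof (induction i)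
    case (Suc i)
    then have "i < n - 1" "i \<noteq> n - 1" by auto
    then show ?case using Suc row[of i] v u by (simp add: comp_mat_mult_vec_nth B_r_mult_vec_nth del: index_mult_mat_vec)
  qed simp
  show "u $ 0 = poly (map_poly of_real (monic_poly n p)) l * v $ 0"
    using row[of "n - 1"] n v u
    by (simp add: comp_mat_mult_geometric_nth[OF v geo] B_r_mult_vec_nth del: index_mult_mat_vec)
qed

lemma plant_eigen_relation:
  fixes x u :: "'a::real_field vec"
  assumes x: "x \<in> carrier_vec n" and u: "u \<in> carrier_vec 1" and n: "n \<ge> 1"
    and eig: "map_mat of_real (plant_A n a) *\<^sub>v x + map_mat of_real (plant_B n b) *\<^sub>v u = l \<cdot>\<^sub>v x"
  shows "poly (map_poly of_real (monic_poly n a)) l * x $ (n - 1) = poly (map_poly of_real (coef_poly n b)) l * u $ 0"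
proof -
  define y where "y = x $ (n - 1)"
  have row: "l * x $ i = (if i = 0 then 0 else x $ (i - 1)) - of_real (a (n - i)) * y + of_real (b (n - i)) * u $ 0"
    if "i < n" for i
    using arg_cong[OF eig, of "\<lambda>w. w $ i"] x u that
    by (simp add: plant_A_mult_vec_nth plant_B_mult_vec_nth y_def del: index_mult_mat_vec)
  \<comment> \<open>weighting row i by l^i and summing telescopes away all entries of x except the last\<close>
  define f where "f i = (if i = 0 then 0 else l ^ i * x $ (i - 1))" for i
  have "l ^ n * y = f n - f 0"
    using n by (simp add: f_def y_def)
  also have "\<dots> = (\<Sum>i<n. f (Suc i) - f i)"
    by (rule sum_lessThan_telescope[symmetric])
  also have "\<dots> = (\<Sum>i<n. l ^ i * (of_real (b (n - i)) * u $ 0 - of_real (a (n - i)) * y))"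
  proof (intro sum.cong refl)
    fix i assume "i \<in> {..<n}"
    then have "l * x $ i - (if i = 0 then 0 else x $ (i - 1)) = of_real (b (n - i)) * u $ 0 - of_real (a (n - i)) * y"
      by (simp add: row)
    moreover have "f (Suc i) - f i = l ^ i * (l * x $ i - (if i = 0 then 0 else x $ (i - 1)))"
      by (simp add: f_def algebra_simps)
    ultimately show "f (Suc i) - f i = l ^ i * (of_real (b (n - i)) * u $ 0 - of_real (a (n - i)) * y)"
      by simp
  qed
  also have "\<dots> = poly (map_poly of_real (coef_poly n b)) l * u $ 0 - poly (map_poly of_real (coef_poly n a)) l * y"
    by (simp add: poly_coef_poly algebra_simps sum_subtractf sum_distrib_left)
  finally show ?thesis
    by (simp add: poly_monic_poly algebra_simps y_def)
qed

lemma plant_eigen_zero: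
  fixes x u :: "'a::real_field vec"
  assumes x: "x \<in> carrier_vec n" and u: "u \<in> carrier_vec 1"
    and eig: "map_mat of_real (plant_A n a) *\<^sub>v x + map_mat of_real (plant_B n b) *\<^sub>v u = l \<cdot>\<^sub>v x"
    and u0: "u $ 0 = 0" and y0: "x $ (n - 1) = 0"
  shows "x = 0\<^sub>v n"
proof -
  have shift: "x $ (i - 1) = l * x $ i" if "0 < i" "i < n" for i
    using arg_cong[OF eig, of "\<lambda>w. w $ i"] x u that u0 y0
    by (simp add: plant_A_mult_vec_nth plant_B_mult_vec_nth del: index_mult_mat_vec)
  have zeros: "x $ (n - 1 - k) = 0" if "k < n" for k
    using that
  proof (induction k)
    case (Suc k)
    then show ?case using shift[of "n - 1 - k"] by (simp add: diff_diff_add)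
  qed (use y0 in simp)
  have "x $ i = 0" if "i < n" for i
  proof -
    have "n - 1 - i < n" and i: "n - 1 - (n - 1 - i) = i" using that by arith+
    then have "x $ (n - 1 - (n - 1 - i)) = 0" by (intro zeros)
    then show ?thesis by (simp only: i)
  qed
  then show ?thesis using x by (auto simp: vec_eq_iff)
qed

text \<open>The closed loop in the coordinates (x, zeta, mu); its lower left block filter_injection is
  (0; B_r C), through which the plant output drives the filter state mu.\<close>

definition filter_injection :: "nat \<Rightarrow> real mat" where
  "filter_injection n = mat (n + n) n (\<lambda>(i, j). if i = n + n - 1 \<and> j = n - 1 then 1 else 0)"

definition closed_loop_mat ::
  "nat \<Rightarrow> (nat \<Rightarrow> real) \<Rightarrow> (nat \<Rightarrow> real) \<Rightarrow> (nat \<Rightarrow> real) \<Rightarrow> real mat \<Rightarrow> real mat" where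
  "closed_loop_mat n a b c K = four_block_mat (plant_A n a) (plant_B n b * K) (filter_injection n)
     (four_block_mat (A_r n c) (0\<^sub>m n n) (0\<^sub>m n n) (A_r n c) + B_f n * K)"

lemma map_mat_of_real_add:
  assumes "A \<in> carrier_mat nr nc" "B \<in> carrier_mat nr nc"
  shows "map_mat of_real (A + B) = map_mat of_real A + map_mat of_real B"
  using assms by (intro eq_matI) auto

lemma B_f_mult_vec:
  fixes u :: "'a::real_algebra_1 vec"
  assumes u: "u \<in> carrier_vec 1"
  shows "map_mat of_real (B_f n) *\<^sub>v u = (map_mat of_real (B_r n) *\<^sub>v u) @\<^sub>v 0\<^sub>v n"
  by (rule eq_vecI) (use u in \<open>auto simp: B_f_mult_vec_nth B_r_mult_vec_nth simp del: index_mult_mat_vec\<close>)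

lemma filter_injection_mult_vec:
  fixes x :: "'a::real_algebra_1 vec"
  assumes x: "x \<in> carrier_vec n" and n: "n \<ge> 1"
  shows "map_mat of_real (filter_injection n) *\<^sub>v x =
    0\<^sub>v n @\<^sub>v (map_mat of_real (B_r n) *\<^sub>v (map_mat of_real (plant_C n) *\<^sub>v x))"
proof (rule eq_vecI)
  fix i assume "i < dim_vec (0\<^sub>v n @\<^sub>v (map_mat of_real (B_r n) *\<^sub>v (map_mat of_real (plant_C n) *\<^sub>v x)))"
  then have i: "i < n + n" by simp
  have "(map_mat of_real (filter_injection n) *\<^sub>v x) $ i = (if i = n + n - 1 then x $ (n - 1) else 0)"
    using x i n by (auto simp: filter_injection_def scalar_prod_def of_real_if_distribs cong: if_cong)
  then show "(map_mat of_real (filter_injection n) *\<^sub>v x) $ i =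
      (0\<^sub>v n @\<^sub>v (map_mat of_real (B_r n) *\<^sub>v (map_mat of_real (plant_C n) *\<^sub>v x))) $ i"
    using x i n by (auto simp: B_r_mult_vec_nth plant_C_mult_vec simp del: index_mult_mat_vec)
qed (simp add: filter_injection_def)

lemma map_mat_of_real_mult_mult_vec:
  assumes "G \<in> carrier_mat m l" "K \<in> carrier_mat l k" "w \<in> carrier_vec k"
  shows "map_mat of_real (G * K) *\<^sub>v w = map_mat of_real G *\<^sub>v (map_mat of_real K *\<^sub>v w)"
  using assms by (simp add: of_real_hom.mat_hom_mult assoc_mult_mat_vec[of _ m l _ k])

lemma filter_block_mult_vec:
  fixes \<zeta> \<mu> :: "'a::real_field vec"
  assumes \<zeta>: "\<zeta> \<in> carrier_vec n" and \<mu>: "\<mu> \<in> carrier_vec n" and K: "K \<in> carrier_mat 1 (n + n)"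
  defines "u \<equiv> map_mat of_real K *\<^sub>v (\<zeta> @\<^sub>v \<mu>)"
  shows "map_mat of_real (four_block_mat (A_r n c) (0\<^sub>m n n) (0\<^sub>m n n) (A_r n c) + B_f n * K) *\<^sub>v (\<zeta> @\<^sub>v \<mu>) =
    (map_mat of_real (A_r n c) *\<^sub>v \<zeta> + map_mat of_real (B_r n) *\<^sub>v u) @\<^sub>v map_mat of_real (A_r n c) *\<^sub>v \<mu>"
proof -
  let ?m = "map_mat (of_real :: real \<Rightarrow> 'a)"
  let ?w = "\<zeta> @\<^sub>v \<mu>"
  let ?D = "four_block_mat (A_r n c) (0\<^sub>m n n) (0\<^sub>m n n) (A_r n c)"
  note carriers = system_mat_carriers
  have w: "?w \<in> carrier_vec (n + n)" using \<zeta> \<mu> by simp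
  have u: "u \<in> carrier_vec 1"
    unfolding u_def using K w by (intro mult_mat_vec_carrier) auto
  have D: "?D \<in> carrier_mat (n + n) (n + n)"
    using carriers by (intro four_block_carrier_mat) auto
  have BfK: "B_f n * K \<in> carrier_mat (n + n) (n + n)"
    using K carriers by (intro mult_carrier_mat) auto
  have "?m (0\<^sub>m n n) = 0\<^sub>m n n" by (rule eq_matI) auto
  then have "?m ?D *\<^sub>v ?w = ?m (A_r n c) *\<^sub>v \<zeta> @\<^sub>v ?m (A_r n c) *\<^sub>v \<mu>"
    using carriers \<zeta> \<mu> by (subst map_four_block_mat[of _ n n _ n _ n]) (auto intro!: mult_mat_vec_split)
  moreover have "?m (B_f n * K) *\<^sub>v ?w = (?m (B_r n) *\<^sub>v u) @\<^sub>v 0\<^sub>v n"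
    unfolding u_def using carriers K w
    by (simp add: map_mat_of_real_mult_mult_vec[of _ "n + n" 1 _ "n + n"] B_f_mult_vec)
  moreover have "?m (A_r n c) *\<^sub>v \<zeta> \<in> carrier_vec n" "?m (B_r n) *\<^sub>v u \<in> carrier_vec n"
    "?m (A_r n c) *\<^sub>v \<mu> \<in> carrier_vec n"
    using carriers \<zeta> \<mu> u by (auto intro!: mult_mat_vec_carrier)
  ultimately show ?thesis
    using D BfK w by (simp add: map_mat_of_real_add add_mult_distrib_mat_vec[of _ "n + n" "n + n"] append_vec_add[of _ n])
qed

lemma closed_loop_mat_mult_vec:
  fixes x \<zeta> \<mu> :: "'a::real_field vec"
  assumes x: "x \<in> carrier_vec n" and \<zeta>: "\<zeta> \<in> carrier_vec n" and \<mu>: "\<mu> \<in> carrier_vec n"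
    and K: "K \<in> carrier_mat 1 (n + n)" and n: "n \<ge> 1"
  defines "u \<equiv> map_mat of_real K *\<^sub>v (\<zeta> @\<^sub>v \<mu>)"
  shows "map_mat of_real (closed_loop_mat n a b c K) *\<^sub>v (x @\<^sub>v \<zeta> @\<^sub>v \<mu>) =
    (map_mat of_real (plant_A n a) *\<^sub>v x + map_mat of_real (plant_B n b) *\<^sub>v u) @\<^sub>v
    (map_mat of_real (A_r n c) *\<^sub>v \<zeta> + map_mat of_real (B_r n) *\<^sub>v u) @\<^sub>v
    (map_mat of_real (A_r n c) *\<^sub>v \<mu> + map_mat of_real (B_r n) *\<^sub>v (map_mat of_real (plant_C n) *\<^sub>v x))"
proof -
  let ?m = "map_mat (of_real :: real \<Rightarrow> 'a)"
  let ?w = "\<zeta> @\<^sub>v \<mu>"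
  let ?F = "four_block_mat (A_r n c) (0\<^sub>m n n) (0\<^sub>m n n) (A_r n c) + B_f n * K"
  note carriers = system_mat_carriers
  have w: "?w \<in> carrier_vec (n + n)" using \<zeta> \<mu> by simp
  have u: "u \<in> carrier_vec 1"
    unfolding u_def using K w by (intro mult_mat_vec_carrier) auto
  have F: "?F \<in> carrier_mat (n + n) (n + n)"
    using K carriers by (intro add_carrier_mat four_block_carrier_mat mult_carrier_mat) auto
  have H: "filter_injection n \<in> carrier_mat (n + n) n"
    by (simp add: filter_injection_def)
  have "?m (closed_loop_mat n a b c K) *\<^sub>v (x @\<^sub>v ?w) =
      (?m (plant_A n a) *\<^sub>v x + ?m (plant_B n b * K) *\<^sub>v ?w) @\<^sub>v (?m (filter_injection n) *\<^sub>v x + ?m ?F *\<^sub>v ?w)"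
    unfolding closed_loop_mat_def using x w F K H carriers
    by (subst map_four_block_mat[of _ n n _ "n + n" _ "n + n"]) (auto intro!: four_block_mat_mult_vec)
  moreover have "?m (plant_B n b * K) *\<^sub>v ?w = ?m (plant_B n b) *\<^sub>v u"
    unfolding u_def using system_mat_carriers(2) K w by (rule map_mat_of_real_mult_mult_vec)
  moreover have "?m (filter_injection n) *\<^sub>v x + ?m ?F *\<^sub>v ?w =
      (?m (A_r n c) *\<^sub>v \<zeta> + ?m (B_r n) *\<^sub>v u) @\<^sub>v (?m (A_r n c) *\<^sub>v \<mu> + ?m (B_r n) *\<^sub>v (?m (plant_C n) *\<^sub>v x))"
  proof -
    have c: "?m (A_r n c) *\<^sub>v \<zeta> + ?m (B_r n) *\<^sub>v u \<in> carrier_vec n" "?m (A_r n c) *\<^sub>v \<mu> \<in> carrier_vec n"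
      "?m (B_r n) *\<^sub>v (?m (plant_C n) *\<^sub>v x) \<in> carrier_vec n"
      using carriers x \<zeta> \<mu> u by (auto intro!: add_carrier_vec mult_mat_vec_carrier)
    show ?thesis
      unfolding filter_injection_mult_vec[OF x n] filter_block_mult_vec[OF \<zeta> \<mu> K, folded u_def]
      using append_vec_add[OF zero_carrier_vec c(1) c(3,2)] c by (simp add: comm_add_vec[OF c(3,2)])
  qed
  ultimately show ?thesis by simp
qed

lemma closed_loop_mat_carrier:
  assumes "K \<in> carrier_mat 1 (n + n)"
  shows "closed_loop_mat n a b c K \<in> carrier_mat (n + (n + n)) (n + (n + n))"
  unfolding closed_loop_mat_def using assms system_mat_carriers
  by (intro four_block_carrier_mat add_carrier_mat mult_carrier_mat[of _ _ 1])
    (auto simp: filter_injection_def)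

lemma A_f_feedback_mult_vec:
  fixes \<zeta> \<mu> :: "'a::real_field vec"
  assumes \<zeta>: "\<zeta> \<in> carrier_vec n" and \<mu>: "\<mu> \<in> carrier_vec n" and K: "K \<in> carrier_mat 1 (n + n)"
  defines "u \<equiv> map_mat of_real K *\<^sub>v (\<zeta> @\<^sub>v \<mu>)"
  shows "map_mat of_real (A_f n a b c + B_f n * K) *\<^sub>v (\<zeta> @\<^sub>v \<mu>) =
    (map_mat of_real (A_r n c) *\<^sub>v \<zeta> + map_mat of_real (B_r n) *\<^sub>v u) @\<^sub>v
    (map_mat of_real (L_b n b) *\<^sub>v \<zeta> + map_mat of_real (A_a n a) *\<^sub>v \<mu>)"
proof -
  let ?m = "map_mat (of_real :: real \<Rightarrow> 'a)"
  let ?w = "\<zeta> @\<^sub>v \<mu>"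
  note carriers = system_mat_carriers
  have w: "?w \<in> carrier_vec (n + n)" using \<zeta> \<mu> by simp
  have u: "u \<in> carrier_vec 1"
    unfolding u_def using K w by (intro mult_mat_vec_carrier) auto
  have Af: "A_f n a b c \<in> carrier_mat (n + n) (n + n)"
    unfolding A_f_def using carriers by (intro four_block_carrier_mat) auto
  have BfK: "B_f n * K \<in> carrier_mat (n + n) (n + n)"
    using K carriers by (intro mult_carrier_mat) auto
  have z: "?m (0\<^sub>m n n) = 0\<^sub>m n n" by (rule eq_matI) auto
  have z\<mu>: "0\<^sub>m n n *\<^sub>v \<mu> = 0\<^sub>v n"
    by (rule eq_vecI) (use \<mu> in \<open>auto simp: scalar_prod_def\<close>)
  have "?m (A_f n a b c) *\<^sub>v ?w = (?m (A_r n c) *\<^sub>v \<zeta> + 0\<^sub>m n n *\<^sub>v \<mu>) @\<^sub>v (?m (L_b n b) *\<^sub>v \<zeta> + ?m (A_a n a) *\<^sub>v \<mu>)"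
    unfolding A_f_def using carriers \<zeta> \<mu>
    by (subst map_four_block_mat[of _ n n _ n _ n]) (auto simp: z intro!: four_block_mat_mult_vec)
  moreover have "?m (B_f n * K) *\<^sub>v ?w = (?m (B_r n) *\<^sub>v u) @\<^sub>v 0\<^sub>v n"
    unfolding u_def using carriers K w
    by (simp add: map_mat_of_real_mult_mult_vec[of _ "n + n" 1 _ "n + n"] B_f_mult_vec)
  moreover have "?m (A_r n c) *\<^sub>v \<zeta> \<in> carrier_vec n" "?m (B_r n) *\<^sub>v u \<in> carrier_vec n"
    "?m (L_b n b) *\<^sub>v \<zeta> + ?m (A_a n a) *\<^sub>v \<mu> \<in> carrier_vec n"
    using carriers \<zeta> \<mu> u by (auto intro!: mult_mat_vec_carrier add_carrier_vec)
  ultimately show ?thesis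
    using Af BfK w \<mu>
    by (simp add: map_mat_of_real_add add_mult_distrib_mat_vec[of _ "n + n" "n + n"] append_vec_add[of _ n] z\<mu>)
qed

lemma smult_append_vec: "k \<cdot>\<^sub>v (v @\<^sub>v w) = (k \<cdot>\<^sub>v v) @\<^sub>v (k \<cdot>\<^sub>v w)"
  by (rule eq_vecI) auto

lemma closed_loop_eigenvector_split:
  fixes v :: "'a::real_field vec"
  assumes n: "n \<ge> 1" and K: "K \<in> carrier_mat 1 (n + n)"
    and eig: "eigenvector (map_mat of_real (closed_loop_mat n a b c K)) v l"
  obtains x \<zeta> \<mu> where "x \<in> carrier_vec n" "\<zeta> \<in> carrier_vec n" "\<mu> \<in> carrier_vec n" "v = x @\<^sub>v \<zeta> @\<^sub>v \<mu>"
    "map_mat of_real (plant_A n a) *\<^sub>v x + map_mat of_real (plant_B n b) *\<^sub>v (map_mat of_real K *\<^sub>v (\<zeta> @\<^sub>v \<mu>)) = l \<cdot>\<^sub>v x"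
    "map_mat of_real (comp_mat n c) *\<^sub>v \<zeta> + map_mat of_real (B_r n) *\<^sub>v (map_mat of_real K *\<^sub>v (\<zeta> @\<^sub>v \<mu>)) = l \<cdot>\<^sub>v \<zeta>"
    "map_mat of_real (comp_mat n c) *\<^sub>v \<mu> + map_mat of_real (B_r n) *\<^sub>v (map_mat of_real (plant_C n) *\<^sub>v x) = l \<cdot>\<^sub>v \<mu>"
proof -
  let ?m = "map_mat (of_real :: real \<Rightarrow> 'a)"
  have "dim_row (closed_loop_mat n a b c K) = n + (n + n)"
    using closed_loop_mat_carrier[OF K] by blast
  then have v: "v \<in> carrier_vec (n + (n + n))" and Mv: "?m (closed_loop_mat n a b c K) *\<^sub>v v = l \<cdot>\<^sub>v v"
    using eig unfolding eigenvector_def by auto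
  define x where "x = vec_first v n"
  define \<zeta> where "\<zeta> = vec_first (vec_last v (n + n)) n"
  define \<mu> where "\<mu> = vec_last (vec_last v (n + n)) n"
  have x: "x \<in> carrier_vec n" and \<zeta>: "\<zeta> \<in> carrier_vec n" and \<mu>: "\<mu> \<in> carrier_vec n"
    unfolding x_def \<zeta>_def \<mu>_def by simp_all
  have v_eq: "v = x @\<^sub>v \<zeta> @\<^sub>v \<mu>"
    unfolding x_def \<zeta>_def \<mu>_def using v by simp
  define u where "u = ?m K *\<^sub>v (\<zeta> @\<^sub>v \<mu>)"
  have u: "u \<in> carrier_vec 1"
    using K \<zeta> \<mu> by (auto simp: u_def intro!: mult_mat_vec_carrier)
  have "(?m (plant_A n a) *\<^sub>v x + ?m (plant_B n b) *\<^sub>v u) @\<^sub>v (?m (comp_mat n c) *\<^sub>v \<zeta> + ?m (B_r n) *\<^sub>v u) @\<^sub>v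
      (?m (comp_mat n c) *\<^sub>v \<mu> + ?m (B_r n) *\<^sub>v (?m (plant_C n) *\<^sub>v x)) =
      (l \<cdot>\<^sub>v x) @\<^sub>v (l \<cdot>\<^sub>v \<zeta>) @\<^sub>v (l \<cdot>\<^sub>v \<mu>)"
    using Mv unfolding v_eq closed_loop_mat_mult_vec[OF x \<zeta> \<mu> K n] smult_append_vec u_def[symmetric] A_r_def .
  moreover have "?m (plant_A n a) *\<^sub>v x + ?m (plant_B n b) *\<^sub>v u \<in> carrier_vec n"
    "?m (comp_mat n c) *\<^sub>v \<zeta> + ?m (B_r n) *\<^sub>v u \<in> carrier_vec n"
    using x \<zeta> u system_mat_carriers by (auto simp: A_r_def intro!: add_carrier_vec mult_mat_vec_carrier)
  ultimately show ?thesis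
    using that[OF x \<zeta> \<mu> v_eq] x \<zeta> unfolding u_def by simp
qed

lemma closed_loop_eigenvalue_imp_feedback_eigenvalue:
  fixes l :: "'a::real_field"
  assumes n: "n \<ge> 1" and K: "K \<in> carrier_mat 1 (n + n)"
    and eig: "eigenvalue (map_mat of_real (closed_loop_mat n a b c K)) l"
    and pc: "poly (map_poly of_real (monic_poly n c)) l \<noteq> 0"
  shows "eigenvalue (map_mat of_real (A_f n a b c + B_f n * K)) l"
proof -
  let ?m = "map_mat (of_real :: real \<Rightarrow> 'a)"
  let ?pa = "poly (map_poly of_real (monic_poly n a)) l"
  let ?pb = "poly (map_poly of_real (coef_poly n b)) l"
  obtain v where v: "eigenvector (?m (closed_loop_mat n a b c K)) v l"
    using eig unfolding eigenvalue_def by blast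
  moreover have "dim_row (closed_loop_mat n a b c K) = n + (n + n)"
    using closed_loop_mat_carrier[OF K] by blast
  ultimately have v0: "v \<noteq> 0\<^sub>v (n + (n + n))"
    unfolding eigenvector_def by simp
  obtain x \<zeta> \<mu> where x: "x \<in> carrier_vec n" and \<zeta>: "\<zeta> \<in> carrier_vec n" and \<mu>: "\<mu> \<in> carrier_vec n"
    and v_eq: "v = x @\<^sub>v \<zeta> @\<^sub>v \<mu>"
    and ex: "?m (plant_A n a) *\<^sub>v x + ?m (plant_B n b) *\<^sub>v (?m K *\<^sub>v (\<zeta> @\<^sub>v \<mu>)) = l \<cdot>\<^sub>v x"
    and e\<zeta>: "?m (comp_mat n c) *\<^sub>v \<zeta> + ?m (B_r n) *\<^sub>v (?m K *\<^sub>v (\<zeta> @\<^sub>v \<mu>)) = l \<cdot>\<^sub>v \<zeta>"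
    and e\<mu>: "?m (comp_mat n c) *\<^sub>v \<mu> + ?m (B_r n) *\<^sub>v (?m (plant_C n) *\<^sub>v x) = l \<cdot>\<^sub>v \<mu>"
    using closed_loop_eigenvector_split[OF n K v] by blast
  have u: "?m K *\<^sub>v (\<zeta> @\<^sub>v \<mu>) \<in> carrier_vec 1" and y: "?m (plant_C n) *\<^sub>v x \<in> carrier_vec 1"
    using K x \<zeta> \<mu> system_mat_carriers by (auto intro!: mult_mat_vec_carrier)
  have y0: "(?m (plant_C n) *\<^sub>v x) $ 0 = x $ (n - 1)"
    using x n by (simp add: plant_C_mult_vec)
  note g\<zeta> = companion_eigen_geometric[OF \<zeta> u n e\<zeta>]
  note g\<mu> = companion_eigen_geometric[OF \<mu> y n e\<mu>]
  have "poly (map_poly of_real (monic_poly n c)) l * (?pa * \<mu> $ 0) =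
      poly (map_poly of_real (monic_poly n c)) l * (?pb * \<zeta> $ 0)"
    using plant_eigen_relation[OF x u n ex] g\<zeta>(2) g\<mu>(2) y0 by (simp add: algebra_simps)
  then have pab: "?pa * \<mu> $ 0 = ?pb * \<zeta> $ 0"
    using pc by simp
  have nonzero: "\<zeta> @\<^sub>v \<mu> \<noteq> 0\<^sub>v (n + n)"
  proof
    have zero_split: "0\<^sub>v (k + m) = 0\<^sub>v k @\<^sub>v (0\<^sub>v m :: 'a vec)" for k m by auto
    assume "\<zeta> @\<^sub>v \<mu> = 0\<^sub>v (n + n)"
    then have \<zeta>0: "\<zeta> = 0\<^sub>v n" and \<mu>0: "\<mu> = 0\<^sub>v n"
      using \<zeta> by (simp_all add: zero_split)
    then have "x = 0\<^sub>v n"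
      using n g\<zeta>(2) g\<mu>(2) y0 by (intro plant_eigen_zero[OF x u ex]) auto
    then show False
      using v0 \<zeta>0 \<mu>0 by (simp add: v_eq zero_split)
  qed
  have "?m (L_b n b) *\<^sub>v \<zeta> + ?m (comp_mat n a) *\<^sub>v \<mu> = l \<cdot>\<^sub>v \<mu>"
    using \<zeta> \<mu> pab
    by (intro eq_vecI) (auto simp: L_b_mult_geometric_nth[OF \<zeta> g\<zeta>(1)] comp_mat_mult_geometric_nth[OF \<mu> g\<mu>(1)]
        simp del: index_mult_mat_vec)
  then have "?m (A_f n a b c + B_f n * K) *\<^sub>v (\<zeta> @\<^sub>v \<mu>) = l \<cdot>\<^sub>v (\<zeta> @\<^sub>v \<mu>)"
    using e\<zeta> by (simp add: A_f_feedback_mult_vec[OF \<zeta> \<mu> K] A_r_def A_a_def smult_append_vec)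
  then have "eigenvector (?m (A_f n a b c + B_f n * K)) (\<zeta> @\<^sub>v \<mu>) l"
    unfolding eigenvector_def using nonzero \<zeta> \<mu> by simp
  then show ?thesis
    unfolding eigenvalue_def by blast
qed

lemma closed_loop_hurwitz:
  assumes n: "n \<ge> 1" and K: "K \<in> carrier_mat 1 (n + n)"
    and feedback: "hurwitz_mat (A_f n a b c + B_f n * K)" and filter: "hurwitz_poly (monic_poly n c)"
  shows "hurwitz_mat (closed_loop_mat n a b c K)"
  unfolding hurwitz_mat_def
proof (intro allI impI)
  fix ev assume ev: "eigenvalue (map_mat complex_of_real (closed_loop_mat n a b c K)) ev"
  show "Re ev < 0"
  proof (cases "poly (map_poly complex_of_real (monic_poly n c)) ev = 0")
    case True
    then show ?thesis using filter unfolding hurwitz_poly_def by blast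
  next
    case False
    then show ?thesis
      using closed_loop_eigenvalue_imp_feedback_eigenvalue[OF n K ev] feedback
      unfolding hurwitz_mat_def by blast
  qed
qed

section \<open>Closed-loop trajectories\<close>

lemma map_mat_of_real_id: "map_mat (of_real :: real \<Rightarrow> real) A = A"
  by (rule eq_matI) auto

lemma sc_index_0: "v \<in> carrier_vec 1 \<Longrightarrow> sc (v $ 0) = v"
  by (rule eq_vecI) (auto simp: sc_def)

lemma vec_deriv_append:
  assumes f: "vec_deriv n f f' t" and g: "vec_deriv m g g' t"
    and dims: "\<And>s. f s \<in> carrier_vec n" "\<And>s. g s \<in> carrier_vec m" "f' \<in> carrier_vec n" "g' \<in> carrier_vec m"
  shows "vec_deriv (n + m) (\<lambda>s. f s @\<^sub>v g s) (f' @\<^sub>v g') t"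
  unfolding vec_deriv_def
proof (intro allI impI)
  fix i assume i: "i < n + m"
  have dims': "dim_vec (f s) = n" "dim_vec (g s) = m" for s
    using dims by auto
  show "((\<lambda>s. (f s @\<^sub>v g s) $ i) has_real_derivative (f' @\<^sub>v g') $ i) (at t within {0..})"
  proof (cases "i < n")
    case True
    then show ?thesis using f dims i unfolding vec_deriv_def by (simp add: dims')
  next
    case False
    then show ?thesis using g dims i unfolding vec_deriv_def by (simp add: dims')
  qed
qed

lemma closed_loop_sol_deriv:
  assumes n: "n \<ge> 1" and K: "Kf \<in> carrier_mat 1 (n + n)"
    and sol: "closed_loop_sol n a b c Kf x \<zeta> \<mu>" and t: "t \<ge> 0"
  shows "vec_deriv (n + (n + n)) (\<lambda>s. x s @\<^sub>v \<zeta> s @\<^sub>v \<mu> s)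
    (closed_loop_mat n a b c Kf *\<^sub>v (x t @\<^sub>v \<zeta> t @\<^sub>v \<mu> t)) t"
proof -
  have x: "\<And>s. x s \<in> carrier_vec n" and \<zeta>: "\<And>s. \<zeta> s \<in> carrier_vec n" and \<mu>: "\<And>s. \<mu> s \<in> carrier_vec n"
    using sol unfolding closed_loop_sol_def by auto
  define u where "u = Kf *\<^sub>v (\<zeta> t @\<^sub>v \<mu> t)"
  have u: "sc (u $ 0) = u"
    unfolding u_def using K \<zeta> \<mu> by (intro sc_index_0 mult_mat_vec_carrier) auto
  have "vec_deriv n x (plant_A n a *\<^sub>v x t + plant_B n b *\<^sub>v sc (u $ 0)) t \<and>
    vec_deriv n \<zeta> (A_r n c *\<^sub>v \<zeta> t + B_r n *\<^sub>v sc (u $ 0)) t \<and>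
    vec_deriv n \<mu> (A_r n c *\<^sub>v \<mu> t + B_r n *\<^sub>v (plant_C n *\<^sub>v x t)) t"
    using sol t unfolding closed_loop_sol_def Let_def u_def by blast
  then have "vec_deriv n x (plant_A n a *\<^sub>v x t + plant_B n b *\<^sub>v u) t"
    "vec_deriv n \<zeta> (A_r n c *\<^sub>v \<zeta> t + B_r n *\<^sub>v u) t"
    "vec_deriv n \<mu> (A_r n c *\<^sub>v \<mu> t + B_r n *\<^sub>v (plant_C n *\<^sub>v x t)) t"
    unfolding u by auto
  moreover have "closed_loop_mat n a b c Kf *\<^sub>v (x t @\<^sub>v \<zeta> t @\<^sub>v \<mu> t) =
      (plant_A n a *\<^sub>v x t + plant_B n b *\<^sub>v u) @\<^sub>v (A_r n c *\<^sub>v \<zeta> t + B_r n *\<^sub>v u) @\<^sub>v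
      (A_r n c *\<^sub>v \<mu> t + B_r n *\<^sub>v (plant_C n *\<^sub>v x t))"
    unfolding u_def using closed_loop_mat_mult_vec[OF x \<zeta> \<mu> K n, of a b c]
    by (simp only: map_mat_of_real_id)
  ultimately show ?thesis
    using x \<zeta> \<mu> K system_mat_carriers
    by (auto intro!: vec_deriv_append append_carrier_vec add_carrier_vec mult_mat_vec_carrier simp: u_def)
qed

lemma sq_norm_vec_append: "sq_norm_vec (v @\<^sub>v w) = sq_norm_vec v + sq_norm_vec w"
proof -
  have split: "(\<Sum>i<k + l. f i) = (\<Sum>i<k. f i) + (\<Sum>i<l. f (k + i))" for k l and f :: "nat \<Rightarrow> real"
    by (induction l) (simp_all add: add_ac)
  have "(\<Sum>i<dim_vec v. (norm ((v @\<^sub>v w) $ i))\<^sup>2) = sq_norm_vec v"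
    unfolding sq_norm_vec_def by (intro sum.cong) auto
  moreover have "(\<Sum>i<dim_vec w. (norm ((v @\<^sub>v w) $ (dim_vec v + i)))\<^sup>2) = sq_norm_vec w"
    unfolding sq_norm_vec_def by (intro sum.cong) auto
  ultimately show ?thesis
    unfolding sq_norm_vec_def[of "v @\<^sub>v w"] by (simp add: split)
qed

lemma state_norm_eq_sq_norm_vec:
  assumes "x \<in> carrier_vec n" "\<zeta> \<in> carrier_vec n" "\<mu> \<in> carrier_vec n"
  shows "state_norm n x \<zeta> \<mu> = sqrt (sq_norm_vec (x @\<^sub>v \<zeta> @\<^sub>v \<mu>))"
proof -
  have "dim_vec x = n" "dim_vec \<zeta> = n" "dim_vec \<mu> = n" using assms by auto
  moreover have "sq_norm_vec (x @\<^sub>v \<zeta> @\<^sub>v \<mu>) = sq_norm_vec x + sq_norm_vec \<zeta> + sq_norm_vec \<mu>"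
    by (simp add: sq_norm_vec_append)
  ultimately show ?thesis by (simp add: state_norm_def sq_norm_vec_def sum.distrib)
qed

lemma state_norm_nonneg: "state_norm n x \<zeta> \<mu> \<ge> 0"
  unfolding state_norm_def by (intro real_sqrt_ge_zero sum_nonneg) auto

lemma closed_loop_GAS_of_exp_bound:
  assumes C: "C \<ge> 0" and \<alpha>: "\<alpha> > 0"
    and bound: "\<And>x \<zeta> \<mu> t. closed_loop_sol n a b c Kf x \<zeta> \<mu> \<Longrightarrow> t \<ge> 0 \<Longrightarrow>
      state_norm n (x t) (\<zeta> t) (\<mu> t) \<le> C * exp (- \<alpha> * t) * state_norm n (x 0) (\<zeta> 0) (\<mu> 0)"
  shows "closed_loop_GAS n a b c Kf"
  unfolding closed_loop_GAS_def
proof (intro conjI allI impI)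
  fix \<epsilon> :: real assume \<epsilon>: "\<epsilon> > 0"
  show "\<exists>\<delta>>0. \<forall>x \<zeta> \<mu>. closed_loop_sol n a b c Kf x \<zeta> \<mu> \<longrightarrow>
      state_norm n (x 0) (\<zeta> 0) (\<mu> 0) < \<delta> \<longrightarrow> (\<forall>t\<ge>0. state_norm n (x t) (\<zeta> t) (\<mu> t) < \<epsilon>)"
  proof (intro exI[of _ "\<epsilon> / (C + 1)"] conjI allI impI)
    show "\<epsilon> / (C + 1) > 0" using \<epsilon> C by simp
    fix x \<zeta> \<mu> and t :: real
    assume sol: "closed_loop_sol n a b c Kf x \<zeta> \<mu>" and small: "state_norm n (x 0) (\<zeta> 0) (\<mu> 0) < \<epsilon> / (C + 1)"
      and t: "t \<ge> 0"
    have "state_norm n (x t) (\<zeta> t) (\<mu> t) \<le> C * exp (- \<alpha> * t) * state_norm n (x 0) (\<zeta> 0) (\<mu> 0)"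
      using bound[OF sol t] .
    also have "\<dots> \<le> C * state_norm n (x 0) (\<zeta> 0) (\<mu> 0)"
      using C \<alpha> t state_norm_nonneg by (intro mult_right_mono mult_left_le) auto
    also have "\<dots> \<le> (C + 1) * state_norm n (x 0) (\<zeta> 0) (\<mu> 0)"
      using state_norm_nonneg by (simp add: distrib_right)
    also have "\<dots> < \<epsilon>"
      using small C by (simp add: field_simps)
    finally show "state_norm n (x t) (\<zeta> t) (\<mu> t) < \<epsilon>" .
  qed
next
  fix x \<zeta> \<mu> assume sol: "closed_loop_sol n a b c Kf x \<zeta> \<mu>"
  have "filterlim (\<lambda>t. \<alpha> * t) at_top at_top"
    by (rule filterlim_tendsto_pos_mult_at_top[OF tendsto_const \<alpha> filterlim_ident])
  then have "filterlim (\<lambda>t. - \<alpha> * t) at_bot at_top"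
    by (simp add: filterlim_uminus_at_top)
  then have "((\<lambda>t. exp (- \<alpha> * t)) \<longlongrightarrow> 0) at_top"
    by (rule filterlim_compose[OF exp_at_bot])
  then have lim: "((\<lambda>t. C * exp (- \<alpha> * t) * state_norm n (x 0) (\<zeta> 0) (\<mu> 0)) \<longlongrightarrow> 0) at_top"
    by (auto intro: tendsto_mult_left_zero tendsto_mult_right_zero)
  show "((\<lambda>t. state_norm n (x t) (\<zeta> t) (\<mu> t)) \<longlongrightarrow> 0) at_top"
  proof (rule tendsto_sandwich[OF _ _ tendsto_const lim])
    show "\<forall>\<^sub>F t in at_top. 0 \<le> state_norm n (x t) (\<zeta> t) (\<mu> t)"
      using state_norm_nonneg by simp
    show "\<forall>\<^sub>F t in at_top. state_norm n (x t) (\<zeta> t) (\<mu> t) \<le> C * exp (- \<alpha> * t) * state_norm n (x 0) (\<zeta> 0) (\<mu> 0)"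
      using eventually_ge_at_top[of "0 :: real"] by eventually_elim (rule bound[OF sol])
  qed
qed

lemma closed_loop_exp_bound:
  assumes n: "n \<ge> 1" and K: "Kf \<in> carrier_mat 1 (n + n)" and H: "hurwitz_mat (closed_loop_mat n a b c Kf)"
  obtains C \<alpha> where "C \<ge> 0" "\<alpha> > 0"
    "\<And>x \<zeta> \<mu> t. closed_loop_sol n a b c Kf x \<zeta> \<mu> \<Longrightarrow> t \<ge> 0 \<Longrightarrow>
      state_norm n (x t) (\<zeta> t) (\<mu> t) \<le> C * exp (- \<alpha> * t) * state_norm n (x 0) (\<zeta> 0) (\<mu> 0)"
proof -
  obtain C \<alpha> where C: "C \<ge> 0" and \<alpha>: "\<alpha> > 0" and decay: "\<And>z t. (\<And>s. z s \<in> carrier_vec (n + (n + n))) \<Longrightarrow>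
      (\<And>s. s \<ge> 0 \<Longrightarrow> vec_deriv (n + (n + n)) z (closed_loop_mat n a b c Kf *\<^sub>v z s) s) \<Longrightarrow> t \<ge> 0 \<Longrightarrow>
      sq_norm_vec (z t) \<le> C * exp (- \<alpha> * t) * sq_norm_vec (z 0)"
    using hurwitz_mat_exp_decay[OF closed_loop_mat_carrier[OF K] H] by blast
  show ?thesis
  proof (rule that[of "sqrt C" "\<alpha> / 2"])
    fix x \<zeta> \<mu> and t :: real
    assume sol: "closed_loop_sol n a b c Kf x \<zeta> \<mu>" and t: "t \<ge> 0"
    have x: "\<And>s. x s \<in> carrier_vec n" and \<zeta>: "\<And>s. \<zeta> s \<in> carrier_vec n" and \<mu>: "\<And>s. \<mu> s \<in> carrier_vec n"
      using sol unfolding closed_loop_sol_def by auto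
    have "sq_norm_vec (x t @\<^sub>v \<zeta> t @\<^sub>v \<mu> t) \<le> C * exp (- \<alpha> * t) * sq_norm_vec (x 0 @\<^sub>v \<zeta> 0 @\<^sub>v \<mu> 0)"
      using x \<zeta> \<mu> closed_loop_sol_deriv[OF n K sol] t by (intro decay) auto
    also have "exp (- \<alpha> * t) = (exp (- (\<alpha> / 2) * t))\<^sup>2"
      by (simp add: power2_eq_square flip: exp_add)
    finally have "sqrt (sq_norm_vec (x t @\<^sub>v \<zeta> t @\<^sub>v \<mu> t)) \<le>
        sqrt (C * (exp (- (\<alpha> / 2) * t))\<^sup>2 * sq_norm_vec (x 0 @\<^sub>v \<zeta> 0 @\<^sub>v \<mu> 0))"
      by (rule real_sqrt_le_mono)
    also have "\<dots> = sqrt C * exp (- (\<alpha> / 2) * t) * sqrt (sq_norm_vec (x 0 @\<^sub>v \<zeta> 0 @\<^sub>v \<mu> 0))"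
      by (simp add: real_sqrt_mult)
    finally show "state_norm n (x t) (\<zeta> t) (\<mu> t) \<le> sqrt C * exp (- (\<alpha> / 2) * t) * state_norm n (x 0) (\<zeta> 0) (\<mu> 0)"
      using x \<zeta> \<mu> by (simp add: state_norm_eq_sq_norm_vec)
  qed (use C \<alpha> in auto)
qed

theorem corollary1:
  fixes n :: nat and a b c :: "nat \<Rightarrow> real" and Kf :: "real mat"
  assumes "n \<ge> 1"
    and "assumption1 n a b"
    and "Kf \<in> carrier_mat 1 (2 * n)"
    and "hurwitz_mat (A_f n a b c + B_f n * Kf)"
    and "hurwitz_poly (monic_poly n c)"
  shows "closed_loop_GAS n a b c Kf"
proof -
  have K: "Kf \<in> carrier_mat 1 (n + n)" using assms(3) by (simp add: mult_2)
  have "hurwitz_mat (closed_loop_mat n a b c Kf)"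
    using closed_loop_hurwitz[OF assms(1) K assms(4,5)] .
  then obtain C \<alpha> where "C \<ge> 0" "\<alpha> > 0"
    and "\<And>x \<zeta> \<mu> t. closed_loop_sol n a b c Kf x \<zeta> \<mu> \<Longrightarrow> t \<ge> 0 \<Longrightarrow>
      state_norm n (x t) (\<zeta> t) (\<mu> t) \<le> C * exp (- \<alpha> * t) * state_norm n (x 0) (\<zeta> 0) (\<mu> 0)"
    using closed_loop_exp_bound[OF assms(1) K] by blast
  then show ?thesis by (rule closed_loop_GAS_of_exp_bound)
qed

end
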